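(* Let $m\ge 2$ and $d$ be integers with $m/2<d\le m$, and consider the $(m,d)$ algorithm on the complete graph on $N$ nodes. For $x\in(0,1]$ let $Z_x$ be a random variable with the Binomial$(m,x)$ distribution and define $$g(x)=\frac{x\,\mathbb{P}(Z_x\le m-d)}{(1-x)\,\mathbb{P}(Z_x\ge d)}\in\mathbb{R}^+\cup\{+\infty\},$$ with $g(0)=+\infty$. Then $g(x)>1$ for all $x\in[0,1/2)$, and for all $\alpha\in(0,1/2)$, $$\limsup_{N\to\infty}\frac1N\log h_N(\alpha)\le-\int_\alpha^{1/2}\log g(x)\,dx.$$
   Context: The $(m,d)$ algorithm (integers $1\le d\le m$) on the complete graph on $N$ nodes: each node has a state in $\{0,1\}$ and an independent unit-rate exponential clock, independent of all states. At each tick of its clock, a node samples $m$ nodes uniformly at random from all $N$ nodes, with replacement, and observes their current states; if at least $d$ of the sampled nodes have a state different from its own, it switches its state, otherwise it keeps it. The number $X(t)$ of nodes in state 1 is a continuous-time Markov chain on $\{0,\ldots,N\}$ with rates $q_{n,n+1}=(N-n)\mathbb{P}(\mathrm{Bin}(m,n/N)\ge d)$ and $q_{n,n-1}=n\,\mathbb{P}(\mathrm{Bin}(m,(N-n)/N)\ge d)$; $0$ and $N$ are absorbing and $X(\infty)$ is the absorbing state eventually reached. For $\alpha=i/N$, $i\in\{0,\ldots,N\}$, $h_N(\alpha)=\mathbb{P}(X(\infty)=N\mid X(0)=\lfloor\alpha N\rfloor)$; for general $\alpha\in[0,1]$, $h_N(\alpha)=(N\alpha-\lfloor N\alpha\rfloor)h_N(\lceil\alpha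 N\rceil/N)+(\lceil N\alpha\rceil-N\alpha)h_N(\lfloor\alpha N\rfloor/N)$. *)

theory Defs
  imports "HOL-Probability.Probability"
begin

definition bin_ge :: "nat \<Rightarrow> real \<Rightarrow> nat \<Rightarrow> real" where
  "bin_ge m p d = measure_pmf.prob (binomial_pmf m p) {d..}"

definition bin_le :: "nat \<Rightarrow> real \<Rightarrow> nat \<Rightarrow> real" where
  "bin_le m p k = measure_pmf.prob (binomial_pmf m p) {..k}"

definition rate_up :: "nat \<Rightarrow> nat \<Rightarrow> nat \<Rightarrow> nat \<Rightarrow> real" where
  "rate_up m d N n = real (N - n) * bin_ge m (real n / real N) d"

definition rate_down :: "nat \<Rightarrow> nat \<Rightarrow> nat \<Rightarrow> nat \<Rightarrow> real" where
  "rate_down m d N n = real n * bin_ge m (real (N - n) / real N) d"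

text \<open>One step of the embedded jump chain of X(t); 0 and N are absorbing.\<close>
definition jump_kernel :: "nat \<Rightarrow> nat \<Rightarrow> nat \<Rightarrow> nat \<Rightarrow> nat pmf" where
  "jump_kernel m d N n =
     (if n = 0 \<or> N \<le> n then return_pmf n
      else map_pmf (\<lambda>b. if b then n + 1 else n - 1)
             (bernoulli_pmf (rate_up m d N n / (rate_up m d N n + rate_down m d N n))))"

definition jump_dist :: "nat \<Rightarrow> nat \<Rightarrow> nat \<Rightarrow> nat \<Rightarrow> nat \<Rightarrow> nat pmf" where
  "jump_dist m d N i t = ((\<lambda>p. bind_pmf p (jump_kernel m d N)) ^^ t) (return_pmf i)"

text \<open>P(X(\<infinity>) = N | X(0) = i): the probability of absorption at N, i.e. the limit
  of the (nondecreasing) probabilities of having been absorbed at N after t jumps.\<close>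
definition absorb_prob :: "nat \<Rightarrow> nat \<Rightarrow> nat \<Rightarrow> nat \<Rightarrow> real" where
  "absorb_prob m d N i = lim (\<lambda>t. pmf (jump_dist m d N i t) N)"

definition h :: "nat \<Rightarrow> nat \<Rightarrow> nat \<Rightarrow> real \<Rightarrow> real" where
  "h m d N \<alpha> =
     (if real N * \<alpha> \<in> \<int> then absorb_prob m d N (nat \<lfloor>real N * \<alpha>\<rfloor>)
      else (real N * \<alpha> - of_int \<lfloor>real N * \<alpha>\<rfloor>) * absorb_prob m d N (nat \<lceil>real N * \<alpha>\<rceil>)
         + (of_int \<lceil>real N * \<alpha>\<rceil> - real N * \<alpha>) * absorb_prob m d N (nat \<lfloor>real N * \<alpha>\<rfloor>))"

definition g :: "nat \<Rightarrow> nat \<Rightarrow> real \<Rightarrow> ereal" where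
  "g m d x =
     (if x = 0 then \<infinity>
      else if (1 - x) * bin_ge m x d = 0 then \<infinity>
      else ereal (x * bin_le m x (m - d) / ((1 - x) * bin_ge m x d)))"

end

theory Submission
  imports Defs
begin

text \<open>Pairing each term of the binomial upper tail \<open>P(Z\<^sub>x \<ge> d)\<close> with its mirror image in the
  lower tail \<open>P(Z\<^sub>x \<le> m - d)\<close> shows \<open>g(x) > 1\<close> for \<open>x < 1/2\<close>; for \<open>0 < n < N\<close> the ratio of
  the down rate to the up rate of \<open>X\<close> is exactly \<open>g(n/N)\<close>.
  The gambler's ruin formula for the jump chain gives a harmonic function dominating the
  absorption probability at \<open>N\<close>. Since the ratios exceed \<open>1\<close> below \<open>N/2\<close>, it shows that
  \<open>h\<^sub>N(\<alpha>)\<close> is at most \<open>N\<close> divided by the product of \<open>g(j/N)\<close> over \<open>N\<alpha> \<le> j \<le> N/2\<close>.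
  On the logarithmic scale this product is a Riemann sum for \<open>\<integral> log g\<close>, and the factor \<open>N\<close>
  disappears after dividing by \<open>N\<close>.\<close>

section \<open>Binomial tails\<close>

lemma bin_ge_eq_sum:
  assumes "0 \<le> p" "p \<le> 1"
  shows "bin_ge m p d = (\<Sum>k=d..m. real (m choose k) * p^k * (1-p)^(m-k))"
proof -
  have "{d..} \<inter> set_pmf (binomial_pmf m p) = {d..m} \<inter> set_pmf (binomial_pmf m p)"
    using assms by (auto simp: set_pmf_binomial_eq)
  hence "bin_ge m p d = measure_pmf.prob (binomial_pmf m p) {d..m}"
    unfolding bin_ge_def by (metis measure_Int_set_pmf)
  thus ?thesis using assms by (simp add: measure_measure_pmf_finite)
qed

lemma bin_le_eq_sum:
  assumes "0 \<le> p" "p \<le> 1"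
  shows "bin_le m p k = (\<Sum>j\<le>k. real (m choose j) * p^j * (1-p)^(m-j))"
  using assms by (simp add: bin_le_def measure_measure_pmf_finite)

lemma bin_ge_one_minus:
  assumes "0 \<le> x" "x \<le> 1" "d \<le> m"
  shows "bin_ge m (1-x) d = bin_le m x (m-d)"
proof -
  have "bin_ge m (1-x) d = (\<Sum>k=d..m. real (m choose k) * (1-x)^k * (1-(1-x))^(m-k))"
    using assms by (simp add: bin_ge_eq_sum)
  also have "\<dots> = (\<Sum>j\<le>m-d. real (m choose (m-j)) * (1-x)^(m-j) * x^(m-(m-j)))"
    using assms by (intro sum.reindex_bij_witness[of _ "\<lambda>k. m-k" "\<lambda>k. m-k"]) auto
  also have "\<dots> = (\<Sum>j\<le>m-d. real (m choose j) * x^j * (1-x)^(m-j))"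
    using assms by (intro sum.cong) (auto simp: binomial_symmetric[symmetric])
  finally show ?thesis using assms by (simp add: bin_le_eq_sum)
qed

lemma bin_ge_pos:
  assumes "0 < x" "x \<le> 1" "d \<le> m"
  shows "0 < bin_ge m x d"
  unfolding bin_ge_eq_sum[OF less_imp_le[OF assms(1)] assms(2)]
  by (rule sum_pos2[of _ m]) (use assms in auto)

lemma bin_le_pos:
  assumes "0 \<le> x" "x < 1"
  shows "0 < bin_le m x k"
  unfolding bin_le_eq_sum[OF assms(1) less_imp_le[OF assms(2)]]
  by (rule sum_pos2[of _ 0]) (use assms in auto)

lemma mirrored_binomial_term_le:
  fixes x :: real
  assumes "0 < x" "x < 1/2" "2*j < m"
  shows "(1-x) * (x^(m-j) * (1-x)^j) \<le> x * (x^j * (1-x)^(m-j))"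
    and "2*j + 1 < m \<Longrightarrow> (1-x) * (x^(m-j) * (1-x)^j) < x * (x^j * (1-x)^(m-j))"
proof -
  define e where "e = m - 2*j - 1"
  have mj: "m - j = j + 1 + e" using assms by (simp add: e_def)
  have lhs: "(1-x) * (x^(m-j) * (1-x)^j) = (x^(j+1) * (1-x)^(j+1)) * x^e"
    by (simp add: mj power_add algebra_simps)
  have rhs: "x * (x^j * (1-x)^(m-j)) = (x^(j+1) * (1-x)^(j+1)) * (1-x)^e"
    by (simp add: mj power_add algebra_simps)
  have pos: "0 < x^(j+1) * (1-x)^(j+1)" using assms by simp
  have "x^e \<le> (1-x)^e" using assms by (intro power_mono) auto
  thus "(1-x) * (x^(m-j) * (1-x)^j) \<le> x * (x^j * (1-x)^(m-j))"
    unfolding lhs rhs using pos by (intro mult_left_mono) auto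
  assume "2*j + 1 < m"
  hence "x^e < (1-x)^e" using assms by (intro power_strict_mono) (auto simp: e_def)
  thus "(1-x) * (x^(m-j) * (1-x)^j) < x * (x^j * (1-x)^(m-j))"
    unfolding lhs rhs using pos by (intro mult_strict_left_mono) auto
qed

text \<open>The upper-tail term \<open>k = m - j\<close> is compared with the lower-tail term \<open>j\<close>; every such
  \<open>j \<le> m - d\<close> satisfies \<open>2j < m\<close> because \<open>2d > m\<close>.\<close>
lemma upper_tail_less_lower_tail:
  fixes x :: real
  assumes "0 < x" "x < 1/2" "2 \<le> m" "real m / 2 < real d" "d \<le> m"
  shows "(1-x) * bin_ge m x d < x * bin_le m x (m-d)"
proof -
  define t where "t j = real (m choose j) * ((1-x) * (x^(m-j) * (1-x)^j))" for j
  define u where "u j = real (m choose j) * (x * (x^j * (1-x)^(m-j)))" for j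
  have small: "2*j < m" if "j \<le> m-d" for j using that assms by linarith
  have "(1-x) * bin_ge m x d = (\<Sum>k=d..m. (1-x) * (real (m choose k) * x^k * (1-x)^(m-k)))"
    using assms by (simp add: bin_ge_eq_sum sum_distrib_left)
  also have "\<dots> = (\<Sum>j\<le>m-d. t j)"
    unfolding t_def using assms
    by (intro sum.reindex_bij_witness[of _ "\<lambda>k. m-k" "\<lambda>k. m-k"])
       (auto simp: binomial_symmetric[symmetric] algebra_simps)
  also have "\<dots> < (\<Sum>j\<le>m-d. u j)"
  proof (rule sum_strict_mono_ex1)
    show "\<forall>j\<in>{..m-d}. t j \<le> u j"
      unfolding t_def u_def using mirrored_binomial_term_le(1)[OF assms(1,2) small]
      by (auto intro: mult_left_mono)
    show "\<exists>j\<in>{..m-d}. t j < u j"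
      unfolding t_def u_def using mirrored_binomial_term_le(2)[OF assms(1,2), of 0] assms
      by (intro bexI[of _ 0]) auto
  qed simp
  also have "\<dots> = x * bin_le m x (m-d)"
    unfolding u_def using assms by (simp add: bin_le_eq_sum sum_distrib_left algebra_simps)
  finally show ?thesis .
qed

lemma continuous_on_bin_ge: "continuous_on {0..1} (\<lambda>x. bin_ge m x d)"
  by (rule continuous_on_eq[where f = "\<lambda>x. \<Sum>k=d..m. real (m choose k) * x^k * (1-x)^(m-k)"])
     (auto intro!: continuous_intros simp: bin_ge_eq_sum)

lemma continuous_on_bin_le: "continuous_on {0..1} (\<lambda>x. bin_le m x k)"
  by (rule continuous_on_eq[where f = "\<lambda>x. \<Sum>j\<le>k. real (m choose j) * x^j * (1-x)^(m-j)"])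
     (auto intro!: continuous_intros simp: bin_le_eq_sum)

definition g_real :: "nat \<Rightarrow> nat \<Rightarrow> real \<Rightarrow> real" where
  "g_real m d x = x * bin_le m x (m-d) / ((1-x) * bin_ge m x d)"

lemma g_eq_ereal_g_real:
  assumes "0 < x" "x < 1" "d \<le> m"
  shows "g m d x = ereal (g_real m d x)"
  using assms bin_ge_pos[of x d m] by (simp add: g_def g_real_def)

lemma g_real_pos:
  assumes "0 < x" "x < 1" "d \<le> m"
  shows "0 < g_real m d x"
  unfolding g_real_def using assms bin_le_pos[of x m "m-d"] bin_ge_pos[of x d m]
  by (intro divide_pos_pos mult_pos_pos) auto

lemma g_real_gt_1:
  assumes "0 < x" "x < 1/2" "2 \<le> m" "real m / 2 < real d" "d \<le> m"
  shows "1 < g_real m d x"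
proof -
  have "0 < (1-x) * bin_ge m x d" using assms bin_ge_pos[of x d m] by simp
  thus ?thesis
    unfolding g_real_def using upper_tail_less_lower_tail[OF assms] by (simp add: less_divide_eq)
qed

lemma g_gt_1:
  assumes "2 \<le> m" "real m / 2 < real d" "d \<le> m" "0 \<le> x" "x < 1/2"
  shows "1 < g m d x"
proof (cases "x = 0")
  case False
  thus ?thesis using assms g_real_gt_1[of x m d] by (simp add: g_eq_ereal_g_real)
qed (simp add: g_def)

lemma continuous_on_ln_g_real:
  assumes "0 < a" "b < 1" "d \<le> m"
  shows "continuous_on {a..b} (\<lambda>x. ln (g_real m d x))"
proof (rule continuous_on_ln)
  have "continuous_on {a..b} (\<lambda>x. bin_ge m x d)" "continuous_on {a..b} (\<lambda>x. bin_le m x (m-d))"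
    using assms by (auto intro: continuous_on_subset[OF continuous_on_bin_ge]
                                continuous_on_subset[OF continuous_on_bin_le])
  moreover have "(1-x) * bin_ge m x d \<noteq> 0" if "x \<in> {a..b}" for x
    using that assms bin_ge_pos[of x d m] by auto
  ultimately show "continuous_on {a..b} (g_real m d)"
    unfolding g_real_def by (intro continuous_intros) auto
  show "\<forall>x\<in>{a..b}. g_real m d x \<noteq> 0"
  proof
    fix x assume "x \<in> {a..b}"
    hence "0 < g_real m d x" using assms by (intro g_real_pos) auto
    thus "g_real m d x \<noteq> 0" by simp
  qed
qed

section \<open>Absorption probabilities of the jump chain\<close>

lemma pmf_times_le_nn_integral:
  fixes f :: "'a \<Rightarrow> ennreal"
  shows "f a * ennreal (pmf p a) \<le> (\<integral>\<^sup>+y. f y \<partial>measure_pmf p)"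
proof -
  have "f a * ennreal (pmf p a) = (\<integral>\<^sup>+y. f a * indicator {a} y \<partial>measure_pmf p)"
    by (simp add: emeasure_pmf_single)
  also have "\<dots> \<le> (\<integral>\<^sup>+y. f y \<partial>measure_pmf p)"
    by (intro nn_integral_mono) (auto simp: indicator_def)
  finally show ?thesis .
qed

lemma jump_dist_Suc:
  "jump_dist m d N i (Suc t) = bind_pmf (jump_dist m d N i t) (jump_kernel m d N)"
  by (simp add: jump_dist_def)

locale md_chain =
  fixes m d N :: nat
  assumes d_le_m: "d \<le> m" and N_pos: "0 < N"
begin

lemma rate_up_pos: "0 < n \<Longrightarrow> n < N \<Longrightarrow> 0 < rate_up m d N n"
  unfolding rate_up_def using bin_ge_pos[of "real n / real N" d m] d_le_m by simp

lemma rate_down_nonneg: "0 \<le> rate_down m d N n"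
  by (simp add: rate_down_def bin_ge_def)

definition up_prob :: "nat \<Rightarrow> real" where
  "up_prob n = rate_up m d N n / (rate_up m d N n + rate_down m d N n)"

definition ratio :: "nat \<Rightarrow> real" where
  "ratio n = rate_down m d N n / rate_up m d N n"

lemma up_prob_pos: "0 < n \<Longrightarrow> n < N \<Longrightarrow> 0 < up_prob n"
  using rate_up_pos rate_down_nonneg by (simp add: up_prob_def add_pos_nonneg)

lemma up_prob_le_1: "0 < n \<Longrightarrow> n < N \<Longrightarrow> up_prob n \<le> 1"
  using rate_up_pos[of n] rate_down_nonneg[of n] by (simp add: up_prob_def divide_le_eq_1)

lemma down_prob_eq: "0 < n \<Longrightarrow> n < N \<Longrightarrow> 1 - up_prob n = up_prob n * ratio n"
  using rate_up_pos[of n] rate_down_nonneg[of n]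
  by (simp add: up_prob_def ratio_def field_simps)

lemma jump_kernel_interior:
  "0 < n \<Longrightarrow> n < N \<Longrightarrow>
     jump_kernel m d N n = map_pmf (\<lambda>b. if b then n + 1 else n - 1) (bernoulli_pmf (up_prob n))"
  by (simp add: jump_kernel_def up_prob_def)

lemma ratio_nonneg: "0 \<le> ratio n"
  unfolding ratio_def using rate_down_nonneg[of n]
  by (simp add: rate_up_def bin_ge_def)

lemma ratio_eq_g_real:
  assumes "0 < n" "n < N"
  shows "ratio n = g_real m d (real n / real N)"
proof -
  define x where "x = real n / real N"
  have x: "0 < x" "x < 1" using assms by (auto simp: x_def)
  have nN: "real n = real N * x" "real (N - n) = real N * (1 - x)"
    using assms by (simp_all add: x_def of_nat_diff field_simps)
  have flip: "real (N - n) / real N = 1 - x"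
    using nN N_pos by simp
  have "rate_down m d N n = real n * bin_le m x (m-d)"
    unfolding rate_down_def flip using bin_ge_one_minus[of x d m] x d_le_m by simp
  moreover have "rate_up m d N n = real (N - n) * bin_ge m x d"
    by (simp add: rate_up_def x_def)
  ultimately have "ratio n = (real N * x * bin_le m x (m-d)) / (real N * ((1-x) * bin_ge m x d))"
    unfolding ratio_def nN by (simp add: mult.assoc)
  thus ?thesis using N_pos by (simp add: g_real_def x_def)
qed

text \<open>The classical gambler's ruin solution: \<open>scale\<close> is the scale function of the
  birth-death chain and \<open>hit_prob n\<close> the probability of reaching \<open>N\<close> before \<open>0\<close> from \<open>n\<close>.\<close>
definition scale :: "nat \<Rightarrow> real" where
  "scale i = (\<Sum>k<i. \<Prod>j=1..k. ratio j)"

definition hit_prob :: "nat \<Rightarrow> real" where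
  "hit_prob n = scale (min n N) / scale N"

lemma scale_mono: "i \<le> j \<Longrightarrow> scale i \<le> scale j"
  unfolding scale_def by (intro sum_mono2) (auto intro: prod_nonneg ratio_nonneg)

lemma one_le_scale_top: "1 \<le> scale N"
  using scale_mono[of 1 N] N_pos by (simp add: scale_def)

lemma hit_prob_nonneg: "0 \<le> hit_prob n"
  unfolding hit_prob_def using one_le_scale_top scale_mono[of 0 "min n N"] by (simp add: scale_def)

lemma hit_prob_top: "N \<le> n \<Longrightarrow> hit_prob n = 1"
  unfolding hit_prob_def using one_le_scale_top by simp

lemma hit_prob_mono: "i \<le> j \<Longrightarrow> hit_prob i \<le> hit_prob j"
  unfolding hit_prob_def using one_le_scale_top scale_mono[of "min i N" "min j N"]
  by (simp add: divide_right_mono)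

lemma scale_Suc: "scale (Suc i) = scale i + (\<Prod>j=1..i. ratio j)"
  by (simp add: scale_def)

lemma hit_prob_harmonic:
  assumes "0 < n" "n < N"
  shows "up_prob n * hit_prob (n+1) + (1 - up_prob n) * hit_prob (n-1) = hit_prob n"
proof -
  define P where "P k = (\<Prod>j=1..k. ratio j)" for k
  have "P n = P (n-1) * ratio n"
    using assms prod.ub_add_nat[of 1 "n-1" ratio 1] by (simp add: P_def)
  hence balance: "up_prob n * P n = (1 - up_prob n) * P (n-1)"
    using down_prob_eq[OF assms] by (metis mult.commute mult.left_commute)
  have "scale (n+1) = scale n + P n" "scale n = scale (n-1) + P (n-1)"
    using scale_Suc[of n] scale_Suc[of "n-1"] assms by (simp_all add: P_def)
  hence "up_prob n * scale (n+1) + (1 - up_prob n) * scale (n-1)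
      = scale n + (up_prob n * P n - (1 - up_prob n) * P (n-1))"
    by (simp add: algebra_simps)
  hence "up_prob n * scale (n+1) + (1 - up_prob n) * scale (n-1) = scale n"
    using balance by simp
  moreover have "min (n+1) N = n+1" "min (n-1) N = n-1" "min n N = n" using assms by auto
  ultimately show ?thesis
    unfolding hit_prob_def using one_le_scale_top by (simp add: field_simps)
qed

lemma nn_integral_hit_prob_jump_kernel:
  "(\<integral>\<^sup>+y. ennreal (hit_prob y) \<partial>measure_pmf (jump_kernel m d N n)) = ennreal (hit_prob n)"
proof (cases "0 < n \<and> n < N")
  case True
  hence "(\<integral>\<^sup>+y. ennreal (hit_prob y) \<partial>measure_pmf (jump_kernel m d N n))
      = ennreal (up_prob n * hit_prob (n+1) + (1 - up_prob n) * hit_prob (n-1))"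
    using up_prob_pos[of n] up_prob_le_1[of n] hit_prob_nonneg
    by (simp add: jump_kernel_interior ennreal_mult ennreal_plus mult.commute)
  thus ?thesis using True hit_prob_harmonic by simp
qed (auto simp: jump_kernel_def)

lemma nn_integral_hit_prob_jump_dist:
  "(\<integral>\<^sup>+y. ennreal (hit_prob y) \<partial>measure_pmf (jump_dist m d N i t)) = ennreal (hit_prob i)"
proof (induction t)
  case 0
  thus ?case by (simp add: jump_dist_def hit_prob_nonneg)
next
  case (Suc t)
  thus ?case by (simp add: jump_dist_Suc nn_integral_hit_prob_jump_kernel)
qed

lemma pmf_jump_dist_top_le_hit_prob: "pmf (jump_dist m d N i t) N \<le> hit_prob i"
proof -
  have "ennreal (pmf (jump_dist m d N i t) N)
      = (\<integral>\<^sup>+y. indicator {N} y \<partial>measure_pmf (jump_dist m d N i t))"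
    by (simp add: emeasure_pmf_single)
  also have "\<dots> \<le> (\<integral>\<^sup>+y. ennreal (hit_prob y) \<partial>measure_pmf (jump_dist m d N i t))"
    by (intro nn_integral_mono) (auto simp: indicator_def hit_prob_top hit_prob_nonneg)
  finally show ?thesis by (simp add: nn_integral_hit_prob_jump_dist hit_prob_nonneg)
qed

lemma incseq_pmf_jump_dist_top: "incseq (\<lambda>t. pmf (jump_dist m d N i t) N)"
proof (rule incseq_SucI)
  fix t
  have "ennreal (pmf (jump_dist m d N i t) N)
     = ennreal (pmf (jump_kernel m d N N) N) * ennreal (pmf (jump_dist m d N i t) N)"
    by (simp add: jump_kernel_def)
  also have "\<dots> \<le> ennreal (pmf (jump_dist m d N i (Suc t)) N)"
    unfolding jump_dist_Suc ennreal_pmf_bind by (rule pmf_times_le_nn_integral)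
  finally show "pmf (jump_dist m d N i t) N \<le> pmf (jump_dist m d N i (Suc t)) N"
    by (simp add: ennreal_le_iff)
qed

lemma absorb_prob_eq_SUP: "absorb_prob m d N i = (SUP t. pmf (jump_dist m d N i t) N)"
proof -
  have "bdd_above (range (\<lambda>t. pmf (jump_dist m d N i t) N))"
    using pmf_jump_dist_top_le_hit_prob by (auto intro!: bdd_aboveI)
  hence "(\<lambda>t. pmf (jump_dist m d N i t) N) \<longlonglongrightarrow> (SUP t. pmf (jump_dist m d N i t) N)"
    using incseq_pmf_jump_dist_top by (rule LIMSEQ_incseq_SUP)
  thus ?thesis unfolding absorb_prob_def by (rule limI)
qed

lemma absorb_prob_le_hit_prob: "absorb_prob m d N i \<le> hit_prob i"
  unfolding absorb_prob_eq_SUP by (rule cSUP_least) (auto simp: pmf_jump_dist_top_le_hit_prob)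

lemma pmf_jump_dist_top_le_absorb_prob: "pmf (jump_dist m d N i t) N \<le> absorb_prob m d N i"
  unfolding absorb_prob_eq_SUP using pmf_jump_dist_top_le_hit_prob
  by (intro cSUP_upper) (auto intro!: bdd_aboveI)

lemma absorb_prob_nonneg: "0 \<le> absorb_prob m d N i"
  using pmf_jump_dist_top_le_absorb_prob[of i 0] pmf_nonneg[of "jump_dist m d N i 0" N] by linarith

lemma pmf_jump_kernel_up_pos:
  assumes "0 < n" "n < N"
  shows "0 < pmf (jump_kernel m d N n) (n+1)"
proof -
  have "(\<lambda>b. if b then n + 1 else n - 1) -` {n+1} = {True}"
    using assms by (auto split: if_splits)
  thus ?thesis
    using up_prob_pos[OF assms] up_prob_le_1[OF assms]
    by (simp add: jump_kernel_interior[OF assms] pmf_map measure_pmf_single)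
qed

lemma pmf_jump_dist_climb_pos:
  assumes "0 < i" "i + t \<le> N"
  shows "0 < pmf (jump_dist m d N i t) (i + t)"
  using assms(2)
proof (induction t)
  case 0
  thus ?case by (simp add: jump_dist_def)
next
  case (Suc t)
  have "0 < ennreal (pmf (jump_kernel m d N (i+t)) (i+t+1)) * ennreal (pmf (jump_dist m d N i t) (i+t))"
    using Suc assms pmf_jump_kernel_up_pos[of "i+t"] by (simp add: ennreal_mult[symmetric])
  also have "\<dots> \<le> (\<integral>\<^sup>+x. ennreal (pmf (jump_kernel m d N x) (i+t+1)) \<partial>measure_pmf (jump_dist m d N i t))"
    by (rule pmf_times_le_nn_integral)
  also have "\<dots> = ennreal (pmf (jump_dist m d N i (Suc t)) (i + Suc t))"
    unfolding jump_dist_Suc ennreal_pmf_bind by simp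
  finally show ?case by simp
qed

lemma absorb_prob_pos:
  assumes "0 < i" "i \<le> N"
  shows "0 < absorb_prob m d N i"
  using pmf_jump_dist_climb_pos[of i "N - i"] pmf_jump_dist_top_le_absorb_prob[of i "N - i"] assms
  by simp

text \<open>The partial products of the ratios are largest at index \<open>c - 1\<close>, so \<open>scale c\<close> is at most
  \<open>c\<close> times that product, whereas \<open>scale N\<close> contains the product up to \<open>K\<close>.\<close>
lemma hit_prob_le_div_prod_ratio:
  assumes "0 < c" "c \<le> Suc K" "K < N"
    and ge1: "\<And>j. 0 < j \<Longrightarrow> j < c \<Longrightarrow> 1 \<le> ratio j"
    and pos: "\<And>j. c \<le> j \<Longrightarrow> j \<le> K \<Longrightarrow> 0 < ratio j"
  shows "hit_prob c \<le> real c / (\<Prod>j=c..K. ratio j)"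
proof -
  define P where "P k = (\<Prod>j=1..k. ratio j)" for k
  define Q where "Q = (\<Prod>j=c..K. ratio j)"
  have split: "P l = P k * (\<Prod>j=k+1..l. ratio j)" if "k \<le> l" for k l
    using prod.ub_add_nat[of 1 k ratio "l - k"] that by (simp add: P_def)
  have P_le: "P k \<le> P (c-1)" if "k \<le> c-1" for k
  proof -
    have "1 \<le> (\<Prod>j=k+1..c-1. ratio j)" using ge1 by (intro prod_ge_1) auto
    hence "P k * 1 \<le> P (c-1)"
      using split[OF that] by (metis P_def mult_left_mono prod_nonneg ratio_nonneg)
    thus ?thesis by simp
  qed
  have P_c: "1 \<le> P (c-1)" unfolding P_def using ge1 by (intro prod_ge_1) auto
  have Q_pos: "0 < Q" unfolding Q_def using pos by (intro prod_pos) auto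
  have num: "scale c \<le> real c * P (c-1)"
    using sum_bounded_above[of "{..<c}" P "P (c-1)"] P_le by (simp add: scale_def P_def)
  have "P K \<le> scale N"
    unfolding scale_def P_def using assms
    by (intro member_le_sum) (auto intro: prod_nonneg ratio_nonneg)
  hence den: "P (c-1) * Q \<le> scale N"
    using split[of "c-1" K] assms by (simp add: Q_def)
  have "scale c / scale N \<le> real c * P (c-1) / (P (c-1) * Q)"
    using P_c Q_pos by (intro frac_le[OF _ num _ den]) auto
  thus ?thesis using assms P_c by (simp add: hit_prob_def Q_def)
qed

text \<open>Off the grid, \<open>h\<close> interpolates between the floor and the ceiling of \<open>N\<alpha>\<close>; since
  \<open>hit_prob\<close> is monotone, the ceiling dominates both.\<close>
lemma h_pos_le_hit_prob:
  assumes "0 < \<alpha>" "\<alpha> \<le> 1"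
  shows "0 < h m d N \<alpha> \<and> h m d N \<alpha> \<le> hit_prob (nat \<lceil>real N * \<alpha>\<rceil>)"
proof -
  define x where "x = real N * \<alpha>"
  define c where "c = nat \<lceil>x\<rceil>"
  define f where "f = nat \<lfloor>x\<rfloor>"
  have "0 < x" "x \<le> real N" using assms N_pos by (auto simp: x_def)
  hence c: "0 < c" "c \<le> N" unfolding c_def by linarith+
  have "f \<le> c" unfolding f_def c_def by (simp add: floor_le_ceiling nat_mono)
  hence A_f: "absorb_prob m d N f \<le> hit_prob c"
    using absorb_prob_le_hit_prob[of f] hit_prob_mono[of f c] by simp
  have A_c: "0 < absorb_prob m d N c" "absorb_prob m d N c \<le> hit_prob c"
    using absorb_prob_pos[OF c] absorb_prob_le_hit_prob[of c] by auto
  have "0 < h m d N \<alpha> \<and> h m d N \<alpha> \<le> hit_prob c"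
  proof (cases "x \<in> \<int>")
    case True
    hence "f = c" unfolding f_def c_def by (metis Ints_cases ceiling_of_int floor_of_int)
    thus ?thesis using True A_c unfolding h_def x_def[symmetric] c_def f_def by simp
  next
    case False
    define \<theta> where "\<theta> = x - of_int \<lfloor>x\<rfloor>"
    have "\<lceil>x\<rceil> = \<lfloor>x\<rfloor> + 1" using False unfolding ceiling_altdef by (metis Ints_of_int)
    hence h_eq: "h m d N \<alpha> = \<theta> * absorb_prob m d N c + (1 - \<theta>) * absorb_prob m d N f"
      using False unfolding h_def x_def[symmetric] c_def f_def \<theta>_def by simp
    have "\<theta> \<noteq> 0" using False unfolding \<theta>_def by (metis Ints_of_int eq_iff_diff_eq_0)
    hence \<theta>: "0 < \<theta>" "\<theta> < 1" unfolding \<theta>_def using floor_correct[of x] by linarith+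
    have "0 < \<theta> * absorb_prob m d N c + (1 - \<theta>) * absorb_prob m d N f"
      using \<theta> A_c absorb_prob_nonneg[of f] by (intro add_pos_nonneg) auto
    moreover have "\<theta> * absorb_prob m d N c + (1 - \<theta>) * absorb_prob m d N f
        \<le> \<theta> * hit_prob c + (1 - \<theta>) * hit_prob c"
      using \<theta> A_c A_f by (intro add_mono mult_left_mono) auto
    ultimately show ?thesis unfolding h_eq by (simp add: algebra_simps)
  qed
  thus ?thesis by (simp add: c_def x_def)
qed

end

lemma ln_h_le:
  assumes m: "2 \<le> m" "real m / 2 < real d" "d \<le> m"
    and N: "0 < N" and \<alpha>: "0 < \<alpha>" "\<alpha> < 1/2"
  shows "ln (h m d N \<alpha>)
      \<le> ln (real N) - (\<Sum>j=nat \<lceil>real N * \<alpha>\<rceil>..N div 2. ln (g_real m d (real j / real N)))"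
proof -
  interpret md_chain m d N using m N by unfold_locales
  define c where "c = nat \<lceil>real N * \<alpha>\<rceil>"
  define K where "K = N div 2"
  have Na: "0 < real N * \<alpha>" "real N * \<alpha> < real N / 2" using N \<alpha> by auto
  hence c: "0 < c" "c \<le> Suc K" "real c < real N * \<alpha> + 1" and K: "K < N"
    using N unfolding c_def K_def by linarith+
  have ratio_ge1: "1 \<le> ratio j" if "0 < j" "j < c" for j
  proof -
    have "real j < real N / 2" using that c Na by linarith
    hence "real j / real N < 1/2" using N by (simp add: divide_less_eq)
    thus ?thesis using that c K m N g_real_gt_1[of "real j / real N" m d] ratio_eq_g_real[of j] by simp
  qed
  have ratio_g: "ratio j = g_real m d (real j / real N)" "0 < ratio j" if "c \<le> j" "j \<le> K" for j
    using that c K m ratio_eq_g_real[of j] g_real_pos[of "real j / real N" d m] by auto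
  define Q where "Q = (\<Prod>j=c..K. ratio j)"
  have Q: "0 < Q" unfolding Q_def using ratio_g by (auto intro!: prod_pos)
  have "ln Q = (\<Sum>j=c..K. ln (ratio j))"
    unfolding Q_def using ratio_g(2) by (intro ln_prod) (auto dest: less_imp_neq[OF ratio_g(2)])
  hence ln_Q: "ln Q = (\<Sum>j=c..K. ln (g_real m d (real j / real N)))"
    using ratio_g by simp
  have "0 < h m d N \<alpha>" "h m d N \<alpha> \<le> real c / Q"
    using h_pos_le_hit_prob[of \<alpha>] hit_prob_le_div_prod_ratio[OF c(1,2) K ratio_ge1 ratio_g(2)] \<alpha>
    unfolding c_def Q_def by auto
  hence "ln (h m d N \<alpha>) \<le> ln (real c / Q)"
    by (intro ln_mono) auto
  also have "\<dots> = ln (real c) - ln Q"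
    using Q c by (simp add: ln_div)
  also have "ln (real c) \<le> ln (real N)" using c K by simp
  finally show ?thesis using ln_Q unfolding c_def K_def by simp
qed

section \<open>Riemann sums\<close>

lemma integral_le_right_riemann_sum:
  fixes F :: "real \<Rightarrow> real"
  assumes N: "0 < N" and "s \<le> t"
    and cont: "continuous_on {real s / real N..real t / real N} F"
    and close: "\<And>x j. s < j \<Longrightarrow> j \<le> t \<Longrightarrow> real (j-1) / real N \<le> x \<Longrightarrow> x \<le> real j / real N
                  \<Longrightarrow> F x \<le> F (real j / real N) + e"
  shows "integral {real s / real N..real t / real N} F \<le> (\<Sum>j=s+1..t. F (real j / real N) + e) / real N"
proof -
  have grid_mono: "real i / real N \<le> real j / real N" if "i \<le> j" for i j
    using that by (simp add: divide_right_mono)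
  have "integral {real s / real N..real n / real N} F \<le> (\<Sum>j=s+1..n. F (real j / real N) + e) / real N"
    if "s \<le> n" "n \<le> t" for n
    using that
  proof (induction n rule: dec_induct)
    case base
    thus ?case by simp
  next
    case (step n)
    define u v where "u = real n / real N" and "v = real (Suc n) / real N"
    have uv: "real s / real N \<le> u" "u \<le> v" "v \<le> real t / real N" "v - u = 1 / real N"
      using step grid_mono[of s n] grid_mono[of n "Suc n"] grid_mono[of "Suc n" t]
      unfolding u_def v_def by (auto simp: diff_divide_distrib[symmetric])
    have "F integrable_on {real s / real N..v}"
      using uv by (intro integrable_continuous_interval continuous_on_subset[OF cont]) auto
    hence "integral {real s / real N..v} F = integral {real s / real N..u} F + integral {u..v} F"
      by (rule Henstock_Kurzweil_Integration.integral_combine[OF uv(1,2), symmetric])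
    also have "integral {u..v} F \<le> integral {u..v} (\<lambda>_. F v + e)"
      using uv step close[of "Suc n"]
      by (intro integral_le integrable_continuous_interval continuous_on_subset[OF cont])
         (auto simp: u_def v_def)
    also have "\<dots> = (F v + e) / real N"
      using uv by simp
    finally show ?case
      using step uv by (simp add: add_divide_distrib v_def u_def)
  qed
  thus ?thesis using assms by simp
qed

lemma integral_le_riemann_sum_plus_error:
  fixes F :: "real \<Rightarrow> real"
  assumes cont: "continuous_on {a..b} F" and bound: "\<And>x. x \<in> {a..b} \<Longrightarrow> \<bar>F x\<bar> \<le> M"
    and close: "\<And>x y. x \<in> {a..b} \<Longrightarrow> y \<in> {a..b} \<Longrightarrow> \<bar>x - y\<bar> \<le> 1 / real N \<Longrightarrow> F x \<le> F y + e"
    and "0 \<le> a" "0 \<le> e" "0 < N" "2 \<le> real N * (b - a)"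
  shows "integral {a..b} F
      \<le> (\<Sum>j=nat \<lceil>real N * a\<rceil>..nat \<lfloor>real N * b\<rfloor>. F (real j / real N)) / real N
         + 3 * M / real N + (b - a) * e"
proof -
  define c K where "c = nat \<lceil>real N * a\<rceil>" and "K = nat \<lfloor>real N * b\<rfloor>"
  have Nr: "0 < real N" using assms by simp
  have "0 < real N * (b - a)" using assms by linarith
  hence "a < b" using Nr by (simp add: zero_less_mult_iff)
  have "real c = of_int \<lceil>real N * a\<rceil>" "real K = of_int \<lfloor>real N * b\<rfloor>"
    using assms \<open>a < b\<close> unfolding c_def K_def by simp_all
  hence c: "real N * a \<le> real c" "real c < real N * a + 1"
    and K: "real K \<le> real N * b" "real N * b < real K + 1"
    by linarith+
  have "2 \<le> real N * b - real N * a" using assms by (simp add: right_diff_distrib)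
  hence cK: "c < K" using c K by linarith
  have "real c / real N - a = (real c - real N * a) / real N"
    "b - real K / real N = (real N * b - real K) / real N"
    using Nr by (simp_all add: field_simps)
  hence "real c / real N - a \<le> 1 / real N" "b - real K / real N \<le> 1 / real N"
    "real c / real N \<le> real K / real N"
    using c K cK Nr by (auto simp: divide_right_mono)
  moreover have "a \<le> real c / real N" "real K / real N \<le> b"
    using c K Nr by (simp_all add: le_divide_eq divide_le_eq mult.commute)
  ultimately have grid: "a \<le> real c / real N" "real c / real N - a \<le> 1 / real N"
    "real K / real N \<le> b" "b - real K / real N \<le> 1 / real N" "real c / real N \<le> real K / real N"
    by auto
  have edge: "integral {u..v} F \<le> M / real N" if "a \<le> u" "u \<le> v" "v \<le> b" "v - u \<le> 1 / real N" for u v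
  proof -
    have "norm (integral {u..v} F) \<le> M * (v - u)"
      using that bound by (intro integral_bound continuous_on_subset[OF cont]) auto
    also have "\<dots> \<le> M / real N"
      using that bound[of a] mult_left_mono[OF that(4), of M] by auto
    finally show ?thesis by simp
  qed
  have integrable: "F integrable_on {u..v}" if "a \<le> u" "v \<le> b" for u v
    using that by (intro integrable_continuous_interval continuous_on_subset[OF cont]) auto
  have "integral {real c / real N..real K / real N} F \<le> (\<Sum>j=c+1..K. F (real j / real N) + e) / real N"
  proof (rule integral_le_right_riemann_sum)
    show "continuous_on {real c / real N..real K / real N} F"
      using grid by (intro continuous_on_subset[OF cont]) auto
    fix x j assume j: "c < j" "j \<le> K" "real (j-1) / real N \<le> x" "x \<le> real j / real N"
    have "real c / real N \<le> real (j-1) / real N" "real j / real N \<le> real K / real N"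
      using j Nr by (simp_all add: divide_right_mono)
    moreover have "real j / real N - x \<le> 1 / real N"
      using j by (simp add: of_nat_diff diff_divide_distrib)
    ultimately show "F x \<le> F (real j / real N) + e"
      using j grid by (intro close) auto
  qed (use assms cK in auto)
  also have "\<dots> = ((\<Sum>j=c..K. F (real j / real N)) - F (real c / real N)
                 + (real K - real c) * e) / real N"
    using cK by (simp add: sum.distrib sum.atLeast_Suc_atMost of_nat_diff)
  also have "\<dots> = (\<Sum>j=c..K. F (real j / real N)) / real N - F (real c / real N) / real N
                 + (real K - real c) / real N * e"
    by (simp add: add_divide_distrib diff_divide_distrib algebra_simps)
  also have "\<dots> \<le> (\<Sum>j=c..K. F (real j / real N)) / real N + M / real N + (b - a) * e"
  proof -
    have "- F (real c / real N) \<le> M"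
      using bound[of "real c / real N"] grid by auto
    hence "- F (real c / real N) / real N \<le> M / real N"
      using Nr by (intro divide_right_mono) auto
    moreover have "(real K - real c) / real N * e \<le> (b - a) * e"
      using grid assms by (intro mult_right_mono) (auto simp: diff_divide_distrib)
    ultimately show ?thesis by linarith
  qed
  finally have middle: "integral {real c / real N..real K / real N} F
      \<le> (\<Sum>j=c..K. F (real j / real N)) / real N + M / real N + (b - a) * e" .
  have "integral {a..b} F = integral {a..real c / real N} F
      + integral {real c / real N..real K / real N} F + integral {real K / real N..b} F"
    using grid integrable by (simp add: Henstock_Kurzweil_Integration.integral_combine)
  also have "\<dots> \<le> (\<Sum>j=c..K. F (real j / real N)) / real N + 3 * M / real N + (b - a) * e"
    using edge[of a "real c / real N"] edge[of "real K / real N" b] middle grid by simp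
  finally show ?thesis unfolding c_def K_def .
qed

lemma eventually_integral_le_riemann_sum:
  fixes F :: "real \<Rightarrow> real"
  assumes cont: "continuous_on {a..b} F" and "0 \<le> a" "a < b" "0 < \<epsilon>"
  shows "\<forall>\<^sub>F N in sequentially. integral {a..b} F
           \<le> (\<Sum>j=nat \<lceil>real N * a\<rceil>..nat \<lfloor>real N * b\<rfloor>. F (real j / real N)) / real N + \<epsilon>"
proof -
  define e where "e = \<epsilon> / 2 / (b - a)"
  have e: "0 < e" "(b - a) * e = \<epsilon> / 2"
    using assms nonzero_mult_div_cancel_left[of "b - a" "\<epsilon> / 2"] by (simp_all add: e_def)
  obtain \<eta> where \<eta>: "0 < \<eta>"
    and uc: "\<And>x y. x \<in> {a..b} \<Longrightarrow> y \<in> {a..b} \<Longrightarrow> dist x y < \<eta> \<Longrightarrow> dist (F x) (F y) < e"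
    using compact_uniformly_continuous[OF cont compact_Icc] e
    unfolding uniformly_continuous_on_def by metis
  obtain M where M: "0 < M" "\<And>x. x \<in> {a..b} \<Longrightarrow> \<bar>F x\<bar> \<le> M"
    using compact_imp_bounded[OF compact_continuous_image[OF cont compact_Icc]]
    unfolding bounded_pos by auto
  obtain N0 :: nat where N0: "1 / \<eta> + 2 / (b - a) + 6 * M / \<epsilon> < real N0"
    using reals_Archimedean2 by blast
  show ?thesis
    using eventually_ge_at_top[of N0]
  proof eventually_elim
    case (elim N)
    have pos: "0 < 1 / \<eta>" "0 < 2 / (b - a)" "0 < 6 * M / \<epsilon>" using \<eta> M assms by auto
    hence large: "1 / \<eta> < real N" "2 / (b - a) < real N" "6 * M / \<epsilon> < real N"
      using N0 elim by linarith+
    hence N: "0 < N" using pos by linarith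
    have step: "1 / real N < \<eta>" using large(1) \<eta> N by (simp add: field_simps)
    have "integral {a..b} F
        \<le> (\<Sum>j=nat \<lceil>real N * a\<rceil>..nat \<lfloor>real N * b\<rfloor>. F (real j / real N)) / real N
           + 3 * M / real N + (b - a) * e"
    proof (rule integral_le_riemann_sum_plus_error[OF cont M(2)])
      fix x y assume "x \<in> {a..b}" "y \<in> {a..b}" "\<bar>x - y\<bar> \<le> 1 / real N"
      hence "dist (F x) (F y) < e" using step by (intro uc) (auto simp: dist_real_def)
      thus "F x \<le> F y + e" by (simp add: dist_real_def)
    next
      show "2 \<le> real N * (b - a)" using large(2) assms by (simp add: field_simps)
    qed (use assms e N in auto)
    moreover have "3 * M / real N \<le> \<epsilon> / 2"
      using large(3) assms N by (simp add: field_simps)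
    ultimately show ?case using e by linarith
  qed
qed

section \<open>The large deviation bound\<close>

lemma limsup_le_of_eventually_le:
  assumes "\<And>\<epsilon>. 0 < \<epsilon> \<Longrightarrow> \<forall>\<^sub>F n in sequentially. f n \<le> c + \<epsilon>"
  shows "limsup (\<lambda>n. ereal (f n)) \<le> ereal c"
proof (rule ereal_le_epsilon2)
  fix \<epsilon> :: real assume "0 < \<epsilon>"
  hence "\<forall>\<^sub>F n in sequentially. ereal (f n) \<le> ereal c + ereal \<epsilon>"
    using assms by (auto elim: eventually_mono)
  thus "limsup (\<lambda>n. ereal (f n)) \<le> ereal c + ereal \<epsilon>"
    by (rule Limsup_bounded)
qed

lemma eventually_ln_h_le:
  assumes m: "2 \<le> m" "real m / 2 < real d" "d \<le> m"
    and \<alpha>: "0 < \<alpha>" "\<alpha> < 1/2" and "0 < \<epsilon>"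
  shows "\<forall>\<^sub>F N in sequentially.
           ln (h m d N \<alpha>) / real N \<le> - integral {\<alpha>..1/2} (\<lambda>x. ln (g_real m d x)) + \<epsilon>"
proof -
  define F where "F x = ln (g_real m d x)" for x
  have "\<forall>\<^sub>F N in sequentially. integral {\<alpha>..1/2} F
          \<le> (\<Sum>j=nat \<lceil>real N * \<alpha>\<rceil>..nat \<lfloor>real N * (1/2)\<rfloor>. F (real j / real N)) / real N + \<epsilon>/2"
    using \<alpha> m \<open>0 < \<epsilon>\<close> unfolding F_def
    by (intro eventually_integral_le_riemann_sum continuous_on_ln_g_real) auto
  moreover have "((\<lambda>N. ln (real N) / real N) \<longlongrightarrow> 0) sequentially"
    by (rule filterlim_compose[OF ln_x_over_x_tendsto_0 filterlim_real_sequentially])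
  hence "\<forall>\<^sub>F N in sequentially. ln (real N) / real N < \<epsilon>/2"
    using \<open>0 < \<epsilon>\<close> by (intro order_tendstoD(2)) auto
  ultimately show ?thesis
    using eventually_gt_at_top[of 0]
  proof eventually_elim
    case (elim N)
    have "nat \<lfloor>real N * (1/2)\<rfloor> = N div 2"
      using floor_divide_of_nat_eq[of N 2, where 'a = real] by simp
    hence "ln (h m d N \<alpha>) \<le> ln (real N)
        - (\<Sum>j=nat \<lceil>real N * \<alpha>\<rceil>..nat \<lfloor>real N * (1/2)\<rfloor>. F (real j / real N))"
      using ln_h_le[OF m elim(3) \<alpha>] by (simp add: F_def)
    hence "ln (h m d N \<alpha>) / real N \<le> ln (real N) / real N
        - (\<Sum>j=nat \<lceil>real N * \<alpha>\<rceil>..nat \<lfloor>real N * (1/2)\<rfloor>. F (real j / real N)) / real N"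
      using elim(3) by (simp add: divide_right_mono flip: diff_divide_distrib)
    thus ?case using elim(1,2) unfolding F_def by linarith
  qed
qed

theorem theorem2:
  fixes m d :: nat
  assumes "m \<ge> 2" and "real m / 2 < real d" and "d \<le> m"
  shows "(\<forall>x\<in>{0..<1/2}. g m d x > 1) \<and>
         (\<forall>\<alpha>\<in>{0<..<1/2}.
            limsup (\<lambda>N. ereal (ln (h m d N \<alpha>) / real N))
              \<le> ereal (- integral {\<alpha>..1/2} (\<lambda>x. ln (real_of_ereal (g m d x)))))"
proof (intro conjI ballI)
  fix x :: real assume "x \<in> {0..<1/2}"
  thus "g m d x > 1" using g_gt_1[OF assms] by auto
next
  fix \<alpha> :: real assume "\<alpha> \<in> {0<..<1/2}"
  hence \<alpha>: "0 < \<alpha>" "\<alpha> < 1/2" by auto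
  have "integral {\<alpha>..1/2} (\<lambda>x. ln (real_of_ereal (g m d x))) = integral {\<alpha>..1/2} (\<lambda>x. ln (g_real m d x))"
    using \<alpha> assms by (intro integral_cong) (simp add: g_eq_ereal_g_real)
  moreover have "limsup (\<lambda>N. ereal (ln (h m d N \<alpha>) / real N))
      \<le> ereal (- integral {\<alpha>..1/2} (\<lambda>x. ln (g_real m d x)))"
    using eventually_ln_h_le[OF assms \<alpha>] by (rule limsup_le_of_eventually_le)
  ultimately show "limsup (\<lambda>N. ereal (ln (h m d N \<alpha>) / real N))
      \<le> ereal (- integral {\<alpha>..1/2} (\<lambda>x. ln (real_of_ereal (g m d x))))"
    by simp
qed

end
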